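(* There exist universal constants $a>0$ and $c_0>0$ such that the following holds. In the setting described in the context, let $\lambda\ge0$ and $\lambda_0\ge c_0\sigma^2\log(ep)/n$, and let $(\hat\alpha,\hat{\boldsymbol\beta})$ be a global minimiser of $\frac1n\|\boldsymbol y-\alpha\mathbf 1-\boldsymbol X\boldsymbol\beta\|_2^2+\lambda_0\|\boldsymbol\beta\|_0+\lambda\sum_{j=1}^q|\{\beta_k:k\in\mathcal I_j\}|$. For $t>0$ and integer $0\le s\le p$ define the event $$E_1(t,s)=\Big\{\frac4n\sup_{\boldsymbol\beta\in\mathbb R^p:\|\boldsymbol\beta\|_0=s}\Big(\boldsymbol\epsilon^\top\frac{\boldsymbol X(\hat{\boldsymbol\beta}-\boldsymbol\beta)}{\|\boldsymbol X(\hat{\boldsymbol\beta}-\boldsymbol\beta)\|_2}\Big)^2-\lambda_0\|\hat{\boldsymbol\beta}\|_0>\frac tn\Big\}.$$ Then for all $t>0$ and $0\le s\le p$, $\mathbb P(E_1(t,s))\le4\exp\big(-\frac{t}{a\sigma^2}+2s\log(3ep)\big)$.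
   Context: Setting: $q\ge1$ categorical predictors, the $j$-th taking values in $[p_j]$, and $N\ge0$ continuous predictors; $p=N+\sum_jp_j$. The deterministic design $\boldsymbol X\in\mathbb R^{n\times p}$ has $i$-th row $(\mathbf 1(C^{(i)}_1=1),\dots,\mathbf 1(C^{(i)}_1=p_1),\dots,\mathbf 1(C^{(i)}_q=p_q),W^{(i)}_1,\dots,W^{(i)}_N)$ where $C^{(i)}_j\in[p_j]$ are the categorical values and $W^{(i)}_l$ the continuous values of observation $i$; $\mathcal I_1=\{1,\dots,p_1\}$, $\mathcal I_2=\{p_1+1,\dots,p_1+p_2\}$, etc. $\boldsymbol y=\mathbf f^*+\boldsymbol\epsilon$ with deterministic $\mathbf f^*\in\mathbb R^n$ and $\boldsymbol\epsilon\sim\mathcal N(\mathbf 0,\sigma^2\boldsymbol I_n)$. Expressions of the form $0/0$ are treated as $0$. Universal constants do not depend on $n,p,q,N,\sigma,\mathbf f^*,\boldsymbol X,\lambda,\lambda_0,t,s$. *)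

theory Defs
  imports "HOL-Probability.Probability"
begin

text \<open>Conventions: observations are indexed by i < n, columns by k < p (0-based),
categorical predictors by j < q (0-based); categorical values are in {1..pj j}.
Vectors are functions nat => real; only the relevant indices matter.\<close>

definition cat_offset :: "(nat \<Rightarrow> nat) \<Rightarrow> nat \<Rightarrow> nat" where
  "cat_offset pj j = (\<Sum>j'<j. pj j')"

definition cat_block :: "(nat \<Rightarrow> nat) \<Rightarrow> nat \<Rightarrow> nat set" where
  "cat_block pj j = {cat_offset pj j ..< cat_offset pj (Suc j)}"

definition num_cols :: "nat \<Rightarrow> (nat \<Rightarrow> nat) \<Rightarrow> nat \<Rightarrow> nat" where
  "num_cols q pj N = N + (\<Sum>j<q. pj j)"

text \<open>Design matrix entry X i k: one-hot encodings of the categorical values C i j,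
followed by the continuous values W i l.\<close>
definition design :: "nat \<Rightarrow> (nat \<Rightarrow> nat) \<Rightarrow> (nat \<Rightarrow> nat \<Rightarrow> nat) \<Rightarrow> (nat \<Rightarrow> nat \<Rightarrow> real)
    \<Rightarrow> nat \<Rightarrow> nat \<Rightarrow> real" where
  "design q pj C W i k =
     (if k < cat_offset pj q
      then (if (\<exists>j<q. k = cat_offset pj j + (C i j - 1)) then 1 else 0)
      else W i (k - cat_offset pj q))"

definition l0norm :: "nat \<Rightarrow> (nat \<Rightarrow> real) \<Rightarrow> nat" where
  "l0norm p \<beta> = card {k. k < p \<and> \<beta> k \<noteq> 0}"

definition matvec :: "nat \<Rightarrow> (nat \<Rightarrow> nat \<Rightarrow> real) \<Rightarrow> (nat \<Rightarrow> real) \<Rightarrow> nat \<Rightarrow> real" where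
  "matvec p X \<beta> i = (\<Sum>k<p. X i k * \<beta> k)"

definition inner_n :: "nat \<Rightarrow> (nat \<Rightarrow> real) \<Rightarrow> (nat \<Rightarrow> real) \<Rightarrow> real" where
  "inner_n n u v = (\<Sum>i<n. u i * v i)"

definition norm_n :: "nat \<Rightarrow> (nat \<Rightarrow> real) \<Rightarrow> real" where
  "norm_n n v = sqrt (\<Sum>i<n. (v i)\<^sup>2)"

definition objective :: "nat \<Rightarrow> nat \<Rightarrow> nat \<Rightarrow> (nat \<Rightarrow> nat) \<Rightarrow> (nat \<Rightarrow> nat \<Rightarrow> real)
    \<Rightarrow> (nat \<Rightarrow> real) \<Rightarrow> real \<Rightarrow> real \<Rightarrow> real \<Rightarrow> (nat \<Rightarrow> real) \<Rightarrow> real" where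
  "objective n p q pj X y lam0 lam \<alpha> \<beta> =
     (1 / real n) * (\<Sum>i<n. (y i - \<alpha> - matvec p X \<beta> i)\<^sup>2)
     + lam0 * real (l0norm p \<beta>)
     + lam * (\<Sum>j<q. real (card (\<beta> ` cat_block pj j)))"

definition is_global_minimiser ::
  "nat \<Rightarrow> nat \<Rightarrow> nat \<Rightarrow> (nat \<Rightarrow> nat) \<Rightarrow> (nat \<Rightarrow> nat \<Rightarrow> real)
    \<Rightarrow> (nat \<Rightarrow> real) \<Rightarrow> real \<Rightarrow> real \<Rightarrow> real \<times> (nat \<Rightarrow> real) \<Rightarrow> bool" where
  "is_global_minimiser n p q pj X y lam0 lam m \<longleftrightarrow>
     (\<forall>\<alpha> \<beta>. objective n p q pj X y lam0 lam (fst m) (snd m) \<le> objective n p q pj X y lam0 lam \<alpha> \<beta>)"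

definition gauss_noise :: "nat \<Rightarrow> real \<Rightarrow> (nat \<Rightarrow> real) measure" where
  "gauss_noise n \<sigma> = PiM {..<n} (\<lambda>_. density lborel (normal_density 0 \<sigma>))"

text \<open>The event E_1(t,s) (as a set of noise realisations), for a selection betahat of
global minimisers (betahat eps = (alphahat, betahat) computed from y = f* + eps).
Division by zero yields 0 in Isabelle, matching the convention 0/0 = 0.\<close>
definition event_E1 :: "nat \<Rightarrow> nat \<Rightarrow> (nat \<Rightarrow> nat \<Rightarrow> real) \<Rightarrow> real \<Rightarrow> real
    \<Rightarrow> ((nat \<Rightarrow> real) \<Rightarrow> real \<times> (nat \<Rightarrow> real)) \<Rightarrow> real \<Rightarrow> nat \<Rightarrow> (nat \<Rightarrow> real) set" where
  "event_E1 n p X \<sigma> lam0 est t s =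
     {\<epsilon> \<in> space (gauss_noise n \<sigma>).
        4 / real n * (SUP \<beta>\<in>{\<beta>::nat \<Rightarrow> real. l0norm p \<beta> = s}.
            (inner_n n \<epsilon> (matvec p X (\<lambda>k. snd (est \<epsilon>) k - \<beta> k))
              / norm_n n (matvec p X (\<lambda>k. snd (est \<epsilon>) k - \<beta> k)))\<^sup>2)
        - lam0 * real (l0norm p (snd (est \<epsilon>))) > t / real n}"

end

theory Submission
  imports Defs
begin

text \<open>Let \<open>S\<close> be the support of \<open>\<beta>hat\<close> and \<open>T\<close> that of a competitor \<open>\<beta>\<close> with \<open>|T| = s\<close>. The
  vector \<open>X (\<beta>hat - \<beta>)\<close> lies in the span \<open>V\<close> of the columns indexed by \<open>S \<union> T\<close>, so by
  Cauchy--Schwarz the normalised correlation in \<open>E\<^sub>1\<close> is at most the squared norm of the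
  projection of \<open>\<epsilon>\<close> onto \<open>V\<close>, where \<open>dim V \<le> |S| + s\<close>. This squared norm is \<open>\<sigma>\<^sup>2\<close> times a
  \<open>\<chi>\<^sup>2\<close> variable, and the Chernoff bound with \<open>E exp (\<chi>\<^sup>2\<^sub>d / 4) = 2 ^ (d / 2)\<close> bounds the
  probability that it exceeds \<open>(t + n \<lambda>\<^sub>0 |S|) / 4\<close> by \<open>2 ^ ((|S| + s) / 2) * exp (-(t + n \<lambda>\<^sub>0 |S|) / (16 \<sigma>\<^sup>2))\<close>.
  A union bound over all \<open>S\<close> and \<open>T\<close> costs \<open>(p choose s) (1 + r)\<^sup>p\<close> with
  \<open>r = sqrt 2 exp (-n \<lambda>\<^sub>0 / (16 \<sigma>\<^sup>2))\<close>; the lower bound on \<open>\<lambda>\<^sub>0\<close> gives \<open>r p \<le> 1\<close>, hence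
  \<open>(1 + r)\<^sup>p \<le> e\<close>. This yields \<open>a = 16\<close> and \<open>c\<^sub>0 = 32\<close>.\<close>

section \<open>Gaussian exponential moments\<close>

lemma normal_density_mult_exp:
  fixes \<sigma> c x :: real
  assumes "\<sigma> > 0"
  shows "normal_density 0 \<sigma> x * exp (c * x) = exp (c\<^sup>2 * \<sigma>\<^sup>2 / 2) * normal_density (c * \<sigma>\<^sup>2) \<sigma> x"
proof -
  have "-(x - 0)\<^sup>2 / (2 * \<sigma>\<^sup>2) + c * x = c\<^sup>2 * \<sigma>\<^sup>2 / 2 + (-(x - c * \<sigma>\<^sup>2)\<^sup>2 / (2 * \<sigma>\<^sup>2))"
    using assms by (simp add: field_simps power2_eq_square)
  then have "exp (-(x - 0)\<^sup>2 / (2 * \<sigma>\<^sup>2)) * exp (c * x)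
      = exp (c\<^sup>2 * \<sigma>\<^sup>2 / 2) * exp (-(x - c * \<sigma>\<^sup>2)\<^sup>2 / (2 * \<sigma>\<^sup>2))"
    by (simp only: exp_add[symmetric])
  then show ?thesis
    unfolding normal_density_def by (simp only: mult.assoc mult.left_commute)
qed

lemma nn_integral_normal_density:
  "\<sigma> > 0 \<Longrightarrow> (\<integral>\<^sup>+ x. ennreal (normal_density \<mu> \<sigma> x) \<partial>lborel) = 1"
  by (subst nn_integral_eq_integral) auto

lemma nn_integral_exp_mult_normal:
  fixes \<sigma> c :: real
  assumes "\<sigma> > 0"
  shows "(\<integral>\<^sup>+ x. ennreal (exp (c * x)) \<partial>density lborel (normal_density 0 \<sigma>))
    = ennreal (exp (c\<^sup>2 * \<sigma>\<^sup>2 / 2))"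
proof -
  have "(\<integral>\<^sup>+ x. ennreal (exp (c * x)) \<partial>density lborel (normal_density 0 \<sigma>))
      = (\<integral>\<^sup>+ x. ennreal (exp (c\<^sup>2 * \<sigma>\<^sup>2 / 2)) * ennreal (normal_density (c * \<sigma>\<^sup>2) \<sigma> x) \<partial>lborel)"
    using assms
    by (subst nn_integral_density) (auto simp: ennreal_mult'[symmetric] normal_density_mult_exp)
  also have "\<dots> = ennreal (exp (c\<^sup>2 * \<sigma>\<^sup>2 / 2))"
    by (subst nn_integral_cmult) (auto simp: nn_integral_normal_density assms)
  finally show ?thesis .
qed

lemma nn_integral_exp_square_std_normal:
  "(\<integral>\<^sup>+ x. ennreal (exp (x\<^sup>2 / 4)) \<partial>density lborel (normal_density 0 1)) = ennreal (sqrt 2)"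
proof -
  have "normal_density 0 1 x * exp (x\<^sup>2 / 4) = sqrt 2 * normal_density 0 (sqrt 2) x" for x :: real
  proof -
    have "exp (-(x - 0)\<^sup>2 / (2 * 1\<^sup>2)) * exp (x\<^sup>2 / 4) = exp (-(x - 0)\<^sup>2 / (2 * (sqrt 2)\<^sup>2))"
      by (simp add: exp_add[symmetric])
    moreover have "1 / sqrt (2 * pi * 1\<^sup>2) = sqrt 2 * (1 / sqrt (2 * pi * (sqrt 2)\<^sup>2))"
      by (simp add: real_sqrt_mult field_simps)
    ultimately show ?thesis
      unfolding normal_density_def by (simp only: mult.assoc)
  qed
  then have "(\<integral>\<^sup>+ x. ennreal (exp (x\<^sup>2 / 4)) \<partial>density lborel (normal_density 0 1))
      = (\<integral>\<^sup>+ x. ennreal (sqrt 2) * ennreal (normal_density 0 (sqrt 2) x) \<partial>lborel)"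
    by (subst nn_integral_density) (auto simp: ennreal_mult'[symmetric])
  also have "\<dots> = ennreal (sqrt 2)"
    by (subst nn_integral_cmult) (auto simp: nn_integral_normal_density)
  finally show ?thesis .
qed

lemma product_prob_space_normal:
  "\<sigma> > 0 \<Longrightarrow> product_prob_space (\<lambda>_::nat. density lborel (normal_density \<mu> \<sigma>))"
  by (simp add: product_prob_space_def product_prob_space_axioms_def product_sigma_finite_def
      prob_space_normal_density prob_space_imp_sigma_finite)

lemma prob_space_gauss_noise: "\<sigma> > 0 \<Longrightarrow> prob_space (gauss_noise n \<sigma>)"
  unfolding gauss_noise_def by (intro prob_space_PiM) (simp add: prob_space_normal_density)

lemma nn_integral_exp_linear_gauss:
  fixes \<sigma> :: real and I :: "nat set" and v :: "nat \<Rightarrow> real"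
  assumes "\<sigma> > 0" "finite I"
  shows "(\<integral>\<^sup>+ x. ennreal (exp (\<Sum>i\<in>I. v i * x i)) \<partial>PiM I (\<lambda>_. density lborel (normal_density 0 \<sigma>)))
    = ennreal (exp (\<sigma>\<^sup>2 * (\<Sum>i\<in>I. (v i)\<^sup>2) / 2))"
proof -
  interpret product_prob_space "\<lambda>_::nat. density lborel (normal_density 0 \<sigma>)"
    using assms(1) by (rule product_prob_space_normal)
  have "(\<integral>\<^sup>+ x. ennreal (exp (\<Sum>i\<in>I. v i * x i)) \<partial>PiM I (\<lambda>_. density lborel (normal_density 0 \<sigma>)))
      = (\<integral>\<^sup>+ x. (\<Prod>i\<in>I. (\<lambda>i y. ennreal (exp (v i * y))) i (x i)) \<partial>PiM I (\<lambda>_. density lborel (normal_density 0 \<sigma>)))"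
    using assms by (simp add: exp_sum prod_ennreal)
  also have "\<dots> = (\<Prod>i\<in>I. \<integral>\<^sup>+ y. ennreal (exp (v i * y)) \<partial>density lborel (normal_density 0 \<sigma>))"
    by (subst product_nn_integral_prod) (auto simp: assms)
  also have "\<dots> = (\<Prod>i\<in>I. ennreal (exp ((v i)\<^sup>2 * \<sigma>\<^sup>2 / 2)))"
    using assms by (simp add: nn_integral_exp_mult_normal)
  also have "\<dots> = ennreal (exp (\<sigma>\<^sup>2 * (\<Sum>i\<in>I. (v i)\<^sup>2) / 2))"
    using assms
    by (simp add: prod_ennreal exp_sum[symmetric] sum_divide_distrib sum_distrib_left mult.commute)
  finally show ?thesis .
qed

lemma nn_integral_exp_sum_squares_std_normal:
  "(\<integral>\<^sup>+ x. ennreal (exp (\<Sum>i<d. (x i)\<^sup>2 / 4)) \<partial>PiM {..<d} (\<lambda>_. density lborel (normal_density 0 1)))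
    = ennreal (sqrt 2 ^ d)"
proof -
  interpret product_prob_space "\<lambda>_::nat. density lborel (normal_density 0 1)"
    by (rule product_prob_space_normal) simp
  have "(\<integral>\<^sup>+ x. ennreal (exp (\<Sum>i<d. (x i)\<^sup>2 / 4)) \<partial>PiM {..<d} (\<lambda>_. density lborel (normal_density 0 1)))
      = (\<integral>\<^sup>+ x. (\<Prod>i\<in>{..<d}. (\<lambda>i y. ennreal (exp (y\<^sup>2 / 4))) i (x i)) \<partial>PiM {..<d} (\<lambda>_. density lborel (normal_density 0 1)))"
    by (simp add: exp_sum prod_ennreal)
  also have "\<dots> = (\<Prod>i\<in>{..<d}. \<integral>\<^sup>+ y. ennreal (exp (y\<^sup>2 / 4)) \<partial>density lborel (normal_density 0 1))"
    by (subst product_nn_integral_prod) auto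
  also have "\<dots> = ennreal (sqrt 2 ^ d)"
    by (simp add: nn_integral_exp_square_std_normal prod_ennreal) (subst ennreal_power, auto)
  finally show ?thesis .
qed

section \<open>Orthonormal lists and projections\<close>

definition orthonormal :: "nat \<Rightarrow> (nat \<Rightarrow> real) list \<Rightarrow> bool" where
  "orthonormal n es \<longleftrightarrow>
     (\<forall>j<length es. \<forall>l<length es. inner_n n (es!j) (es!l) = (if j = l then 1 else 0))"

definition in_span :: "nat \<Rightarrow> (nat \<Rightarrow> real) list \<Rightarrow> (nat \<Rightarrow> real) \<Rightarrow> bool" where
  "in_span n es v \<longleftrightarrow> (\<exists>c. \<forall>i<n. v i = (\<Sum>j<length es. c j * (es!j) i))"

definition proj_norm_sq :: "nat \<Rightarrow> (nat \<Rightarrow> real) list \<Rightarrow> (nat \<Rightarrow> real) \<Rightarrow> real" where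
  "proj_norm_sq n es \<epsilon> = (\<Sum>j<length es. (inner_n n \<epsilon> (es!j))\<^sup>2)"

lemma inner_n_commute: "inner_n n u v = inner_n n v u"
  by (simp add: inner_n_def mult.commute)

lemma sum_squares_orthonormal_comb:
  assumes "orthonormal n es"
  shows "(\<Sum>i<n. (\<Sum>j<length es. c j * (es!j) i)\<^sup>2) = (\<Sum>j<length es. (c j)\<^sup>2)"
proof -
  define d where "d = length es"
  have "(\<Sum>i<n. (\<Sum>j<d. c j * (es!j) i)\<^sup>2)
      = (\<Sum>i<n. \<Sum>j<d. \<Sum>l<d. c j * c l * ((es!j) i * (es!l) i))"
    by (rule sum.cong[OF refl]) (simp add: power2_eq_square sum_product mult_ac)
  also have "\<dots> = (\<Sum>j<d. \<Sum>l<d. \<Sum>i<n. c j * c l * ((es!j) i * (es!l) i))"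
    by (subst sum.swap) (rule sum.cong[OF refl], rule sum.swap)
  also have "\<dots> = (\<Sum>j<d. \<Sum>l<d. c j * c l * inner_n n (es!j) (es!l))"
    by (simp add: inner_n_def sum_distrib_left)
  also have "\<dots> = (\<Sum>j<d. \<Sum>l<d. (if l = j then (c j)\<^sup>2 else 0))"
    using assms unfolding orthonormal_def d_def
    by (intro sum.cong refl) (auto simp: power2_eq_square)
  also have "\<dots> = (\<Sum>j<d. (c j)\<^sup>2)"
    by simp
  finally show ?thesis unfolding d_def .
qed

lemma inner_n_comb:
  assumes "\<forall>i<n. u i = (\<Sum>j<d. c j * (es!j) i)"
  shows "inner_n n \<epsilon> u = (\<Sum>j<d. c j * inner_n n \<epsilon> (es!j))"
proof -
  have "inner_n n \<epsilon> u = (\<Sum>i<n. \<Sum>j<d. c j * (\<epsilon> i * (es!j) i))"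
    unfolding inner_n_def using assms by (intro sum.cong) (auto simp: sum_distrib_left mult_ac)
  also have "\<dots> = (\<Sum>j<d. \<Sum>i<n. c j * (\<epsilon> i * (es!j) i))"
    by (rule sum.swap)
  finally show ?thesis
    by (simp add: inner_n_def sum_distrib_left)
qed

lemma ratio_sq_le_proj_norm_sq:
  assumes "orthonormal n es" "in_span n es u"
  shows "(inner_n n \<epsilon> u / norm_n n u)\<^sup>2 \<le> proj_norm_sq n es \<epsilon>"
proof -
  define d where "d = length es"
  obtain c where u: "\<forall>i<n. u i = (\<Sum>j<d. c j * (es!j) i)"
    using assms(2) unfolding in_span_def d_def by blast
  have "(norm_n n u)\<^sup>2 = (\<Sum>j<d. (c j)\<^sup>2)"
    using sum_squares_orthonormal_comb[OF assms(1)] u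
    unfolding norm_n_def d_def by (simp add: sum_nonneg)
  moreover have "(inner_n n \<epsilon> u)\<^sup>2 \<le> (\<Sum>j<d. (c j)\<^sup>2) * proj_norm_sq n es \<epsilon>"
    unfolding inner_n_comb[OF u] proj_norm_sq_def d_def by (rule Cauchy_Schwarz_ineq_sum)
  moreover have "0 \<le> proj_norm_sq n es \<epsilon>"
    unfolding proj_norm_sq_def by (simp add: sum_nonneg)
  ultimately show ?thesis
    by (cases "(\<Sum>j<d. (c j)\<^sup>2) = 0")
      (simp_all add: power_divide pos_divide_le_eq mult.commute sum_nonneg order.strict_iff_order)
qed

lemma in_span_append:
  assumes "in_span n es u"
  shows "in_span n (es @ fs) u"
proof -
  obtain c where c: "\<forall>i<n. u i = (\<Sum>j<length es. c j * (es!j) i)"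
    using assms unfolding in_span_def by blast
  have "(\<Sum>j<length (es @ fs). (if j < length es then c j else 0) * ((es @ fs)!j) i)
      = (\<Sum>j<length es. c j * (es!j) i)" for i
    by (rule sum.mono_neutral_cong_right) (auto simp: nth_append)
  then show ?thesis
    unfolding in_span_def using c by (intro exI[of _ "\<lambda>j. if j < length es then c j else 0"]) simp
qed

lemma in_span_sum:
  assumes "finite U" "\<forall>k\<in>U. in_span n es (v k)"
  shows "in_span n es (\<lambda>i. \<Sum>k\<in>U. a k * v k i)"
proof -
  obtain c where c: "\<forall>k\<in>U. \<forall>i<n. v k i = (\<Sum>j<length es. c k j * (es!j) i)"
    using bchoice[OF assms(2)[unfolded in_span_def]] by blast
  have "(\<Sum>k\<in>U. a k * v k i) = (\<Sum>j<length es. (\<Sum>k\<in>U. a k * c k j) * (es!j) i)" if "i < n" for i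
  proof -
    have "(\<Sum>k\<in>U. a k * v k i) = (\<Sum>k\<in>U. \<Sum>j<length es. a k * c k j * (es!j) i)"
      using c that by (intro sum.cong refl) (simp add: sum_distrib_left mult.assoc)
    also have "\<dots> = (\<Sum>j<length es. \<Sum>k\<in>U. a k * c k j * (es!j) i)"
      by (rule sum.swap)
    finally show ?thesis
      by (simp add: sum_distrib_right)
  qed
  then show ?thesis
    unfolding in_span_def by (intro exI[of _ "\<lambda>j. \<Sum>k\<in>U. a k * c k j"]) blast
qed

lemma orthonormal_snoc:
  assumes "orthonormal n es" "inner_n n e e = 1" "\<And>j. j < length es \<Longrightarrow> inner_n n (es!j) e = 0"
  shows "orthonormal n (es @ [e])"
  using assms unfolding orthonormal_def
  by (auto simp: nth_append less_Suc_eq inner_n_commute)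

lemma inner_n_residual_eq_0:
  assumes "orthonormal n es" "j < length es"
  shows "inner_n n (es!j) (\<lambda>i. v i - (\<Sum>l<length es. inner_n n v (es!l) * (es!l) i)) = 0"
proof -
  have "(\<Sum>i<n. \<Sum>l<length es. inner_n n v (es!l) * ((es!j) i * (es!l) i))
      = (\<Sum>l<length es. \<Sum>i<n. inner_n n v (es!l) * ((es!j) i * (es!l) i))"
    by (rule sum.swap)
  also have "\<dots> = (\<Sum>l<length es. inner_n n v (es!l) * inner_n n (es!j) (es!l))"
    by (simp add: inner_n_def sum_distrib_left)
  also have "\<dots> = (\<Sum>l<length es. if l = j then inner_n n v (es!j) else 0)"
    using assms unfolding orthonormal_def by (intro sum.cong refl) auto
  finally show ?thesis
    using assms(2)
    by (simp add: inner_n_def right_diff_distrib sum_subtractf sum_distrib_left mult_ac inner_n_commute)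
qed

lemma orthonormal_extend:
  assumes "orthonormal n es"
  obtains es' where "orthonormal n es'" "length es' \<le> Suc (length es)" "in_span n es' v"
    "\<And>u. in_span n es u \<Longrightarrow> in_span n es' u"
proof -
  define m where "m = length es"
  define w where "w = (\<lambda>i. v i - (\<Sum>j<m. inner_n n v (es!j) * (es!j) i))"
  show ?thesis
  proof (cases "norm_n n w = 0")
    case True
    then have "\<forall>i<n. w i = 0"
      unfolding norm_n_def by (simp add: sum_nonneg_eq_0_iff)
    then have "in_span n es v"
      unfolding in_span_def w_def m_def by (intro exI[of _ "\<lambda>j. inner_n n v (es!j)"]) simp
    with assms show ?thesis
      by (intro that[of es]) auto
  next
    case False
    define e where "e = (\<lambda>i. w i / norm_n n w)"
    have "inner_n n e e = (\<Sum>i<n. w i * w i) / (norm_n n w * norm_n n w)"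
      by (simp add: inner_n_def e_def sum_divide_distrib)
    also have "(\<Sum>i<n. w i * w i) = norm_n n w * norm_n n w"
      unfolding norm_n_def by (simp add: sum_nonneg power2_eq_square)
    finally have ee: "inner_n n e e = 1"
      using False by simp
    have "inner_n n (es!j) e = 0" if "j < m" for j
      using inner_n_residual_eq_0[OF assms that[unfolded m_def], of v]
      by (simp add: inner_n_def e_def w_def m_def sum_divide_distrib[symmetric])
    then have onb: "orthonormal n (es @ [e])"
      using orthonormal_snoc[OF assms ee] unfolding m_def by blast
    have "v i = (\<Sum>j<Suc m. (if j < m then inner_n n v (es!j) else norm_n n w) * ((es @ [e])!j) i)"
      for i
      using False by (simp add: nth_append m_def e_def w_def)
    then have "in_span n (es @ [e]) v"
      unfolding in_span_def m_def
      by (intro exI[of _ "\<lambda>j. if j < m then inner_n n v (es!j) else norm_n n w"]) (simp add: m_def)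
    with onb show ?thesis
      by (intro that[of "es @ [e]"]) (auto simp: in_span_append)
  qed
qed

lemma orthonormal_spanning_list_exists:
  assumes "finite U"
  shows "\<exists>es. orthonormal n es \<and> length es \<le> card U \<and> (\<forall>k\<in>U. in_span n es (v k))"
  using assms
proof (induction U rule: finite_induct)
  case empty
  show ?case
    by (intro exI[of _ "[]"]) (simp add: orthonormal_def)
next
  case (insert k U)
  then obtain es where "orthonormal n es" "length es \<le> card U" "\<forall>k\<in>U. in_span n es (v k)"
    by blast
  moreover obtain es' where "orthonormal n es'" "length es' \<le> Suc (length es)" "in_span n es' (v k)"
    "\<And>u. in_span n es u \<Longrightarrow> in_span n es' u"
    using orthonormal_extend[OF \<open>orthonormal n es\<close>, of "v k"] by blast
  ultimately show ?case
    using insert.hyps by (intro exI[of _ es']) auto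
qed

section \<open>Chernoff bound for the projected noise\<close>

text \<open>The exponential moment of the squared projection is computed by linearising the square
  with an auxiliary standard Gaussian vector \<open>g\<close>: by Fubini,
  \<open>E exp (|P \<epsilon>|\<^sup>2 / (4 \<sigma>\<^sup>2)) = E\<^sub>g E\<^sub>\<epsilon> exp (\<langle>P \<epsilon>, g\<rangle> / (\<sigma> sqrt 2)) = E\<^sub>g exp (|g|\<^sup>2 / 4)\<close>.\<close>

lemma nn_integral_exp_proj_norm_sq:
  assumes "\<sigma> > 0" "orthonormal n es"
  shows "(\<integral>\<^sup>+\<epsilon>. ennreal (exp (proj_norm_sq n es \<epsilon> / (4 * \<sigma>\<^sup>2))) \<partial>gauss_noise n \<sigma>)
    = ennreal (sqrt 2 ^ length es)"
proof -
  define d where "d = length es"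
  define G where "G = PiM {..<d} (\<lambda>_::nat. density lborel (normal_density 0 (1::real)))"
  define E where "E = gauss_noise n \<sigma>"
  define f where "f \<epsilon> g = ennreal (exp (\<Sum>j<d. inner_n n \<epsilon> (es!j) / (\<sigma> * sqrt 2) * g j))"
    for \<epsilon> g :: "nat \<Rightarrow> real"
  have "prob_space G"
    unfolding G_def by (intro prob_space_PiM prob_space_normal_density) simp
  then interpret pair_sigma_finite E G
    unfolding pair_sigma_finite_def E_def
    using prob_space_gauss_noise[OF assms(1)] by (simp add: prob_space_imp_sigma_finite)
  have integral_g: "(\<integral>\<^sup>+g. f \<epsilon> g \<partial>G) = ennreal (exp (proj_norm_sq n es \<epsilon> / (4 * \<sigma>\<^sup>2)))" for \<epsilon>
  proof -
    have "(\<integral>\<^sup>+g. f \<epsilon> g \<partial>G)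
        = ennreal (exp (1\<^sup>2 * (\<Sum>j<d. (inner_n n \<epsilon> (es!j) / (\<sigma> * sqrt 2))\<^sup>2) / 2))"
      unfolding f_def G_def by (rule nn_integral_exp_linear_gauss) auto
    then show ?thesis
      by (simp add: proj_norm_sq_def d_def power_divide power_mult_distrib sum_divide_distrib)
  qed
  have integral_\<epsilon>: "(\<integral>\<^sup>+\<epsilon>. f \<epsilon> g \<partial>E) = ennreal (exp (\<Sum>j<d. (g j)\<^sup>2 / 4))" for g
  proof -
    define u where "u i = (\<Sum>j<d. g j * (es!j) i)" for i
    have inner_u: "inner_n n \<epsilon> u = (\<Sum>j<d. g j * inner_n n \<epsilon> (es!j))" for \<epsilon>
      by (rule inner_n_comb) (simp add: u_def)
    have lin: "(\<Sum>j<d. inner_n n \<epsilon> (es!j) / (\<sigma> * sqrt 2) * g j)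
        = (\<Sum>i\<in>{..<n}. u i / (\<sigma> * sqrt 2) * \<epsilon> i)" for \<epsilon>
    proof -
      have "(\<Sum>j<d. inner_n n \<epsilon> (es!j) / (\<sigma> * sqrt 2) * g j) = inner_n n \<epsilon> u / (\<sigma> * sqrt 2)"
        by (simp add: inner_u sum_divide_distrib mult.commute)
      also have "\<dots> = (\<Sum>i\<in>{..<n}. u i / (\<sigma> * sqrt 2) * \<epsilon> i)"
        by (simp add: inner_n_def sum_divide_distrib mult_ac)
      finally show ?thesis .
    qed
    have "(\<integral>\<^sup>+\<epsilon>. f \<epsilon> g \<partial>E)
        = ennreal (exp (\<sigma>\<^sup>2 * (\<Sum>i\<in>{..<n}. (u i / (\<sigma> * sqrt 2))\<^sup>2) / 2))"
      unfolding f_def E_def gauss_noise_def lin using assms(1) by (intro nn_integral_exp_linear_gauss) auto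
    also have "(\<Sum>i\<in>{..<n}. (u i / (\<sigma> * sqrt 2))\<^sup>2) = (\<Sum>i<n. (u i)\<^sup>2) / (2 * \<sigma>\<^sup>2)"
      by (simp add: power_divide power_mult_distrib sum_divide_distrib mult.commute)
    also have "(\<Sum>i<n. (u i)\<^sup>2) = (\<Sum>j<d. (g j)\<^sup>2)"
      unfolding u_def d_def by (rule sum_squares_orthonormal_comb[OF assms(2)])
    finally show ?thesis
      using assms(1) by (simp add: sum_divide_distrib[symmetric])
  qed
  have "case_prod f \<in> borel_measurable (E \<Otimes>\<^sub>M G)"
    unfolding f_def E_def G_def gauss_noise_def inner_n_def by measurable
  then have "(\<integral>\<^sup>+\<epsilon>. (\<integral>\<^sup>+g. f \<epsilon> g \<partial>G) \<partial>E) = (\<integral>\<^sup>+g. (\<integral>\<^sup>+\<epsilon>. f \<epsilon> g \<partial>E) \<partial>G)"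
    by (rule Fubini'[symmetric])
  also have "\<dots> = (\<integral>\<^sup>+g. ennreal (exp (\<Sum>j<d. (g j)\<^sup>2 / 4)) \<partial>G)"
    by (simp only: integral_\<epsilon>)
  also have "\<dots> = ennreal (sqrt 2 ^ d)"
    unfolding G_def by (rule nn_integral_exp_sum_squares_std_normal)
  finally show ?thesis
    unfolding integral_g E_def d_def .
qed

definition proj_tail_event :: "nat \<Rightarrow> real \<Rightarrow> (nat \<Rightarrow> real) list \<Rightarrow> real \<Rightarrow> (nat \<Rightarrow> real) set" where
  "proj_tail_event n \<sigma> es x = {\<epsilon> \<in> space (gauss_noise n \<sigma>). x < 4 * proj_norm_sq n es \<epsilon>}"

lemma proj_tail_event_sets [measurable]: "proj_tail_event n \<sigma> es x \<in> sets (gauss_noise n \<sigma>)"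
  unfolding proj_tail_event_def proj_norm_sq_def gauss_noise_def inner_n_def by measurable

lemma measure_proj_tail_event_le:
  assumes "\<sigma> > 0" "orthonormal n es"
  shows "measure (gauss_noise n \<sigma>) (proj_tail_event n \<sigma> es x)
    \<le> sqrt 2 ^ length es * exp (- x / (16 * \<sigma>\<^sup>2))"
proof -
  define E where "E = gauss_noise n \<sigma>"
  interpret prob_space E
    unfolding E_def using assms(1) by (rule prob_space_gauss_noise)
  have [measurable]: "proj_norm_sq n es \<in> borel_measurable E"
    unfolding proj_norm_sq_def E_def gauss_noise_def inner_n_def by measurable
  have "emeasure E (proj_tail_event n \<sigma> es x) \<le> emeasure E {\<epsilon>\<in>space E. proj_norm_sq n es \<epsilon> \<ge> x / 4}"
    unfolding proj_tail_event_def E_def by (rule emeasure_mono) (auto simp: E_def[symmetric])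
  also have "\<dots> \<le> ennreal (exp (- (1 / (4 * \<sigma>\<^sup>2)) * (x / 4))) *
      (\<integral>\<^sup>+\<epsilon>. ennreal (exp (1 / (4 * \<sigma>\<^sup>2) * proj_norm_sq n es \<epsilon>)) * indicator (space E) \<epsilon> \<partial>E)"
    using assms(1) by (intro Chernoff_ineq_nn_integral_ge) auto
  also have "(\<integral>\<^sup>+\<epsilon>. ennreal (exp (1 / (4 * \<sigma>\<^sup>2) * proj_norm_sq n es \<epsilon>)) * indicator (space E) \<epsilon> \<partial>E)
      = ennreal (sqrt 2 ^ length es)"
    unfolding E_def using nn_integral_exp_proj_norm_sq[OF assms]
    by (subst nn_integral_cong[where v = "\<lambda>\<epsilon>. ennreal (exp (proj_norm_sq n es \<epsilon> / (4 * \<sigma>\<^sup>2)))"])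
      (simp_all add: indicator_def)
  finally show ?thesis
    unfolding E_def[symmetric]
    by (simp add: emeasure_eq_measure ennreal_mult'[symmetric] mult.commute ennreal_le_iff)
qed

section \<open>Reduction to finitely many projections\<close>

lemma l0norm_eq_card_support: "l0norm p \<beta> = card (support_on {..<p} \<beta>)"
  by (simp add: l0norm_def support_on_def)

lemma in_span_matvec:
  assumes "support_on {..<p} \<gamma> \<subseteq> U" "U \<subseteq> {..<p}" "\<forall>k\<in>U. in_span n es (\<lambda>i. X i k)"
  shows "in_span n es (matvec p X \<gamma>)"
proof -
  have "matvec p X \<gamma> = (\<lambda>i. \<Sum>k\<in>U. \<gamma> k * X i k)"
    unfolding matvec_def using assms(1,2)
    by (intro ext sum.mono_neutral_cong_right) (auto simp: in_support_on mult.commute)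
  then show ?thesis
    using in_span_sum[OF finite_subset[OF assms(2)] assms(3)] by simp
qed

lemma SUP_sparse_ratio_sq_le:
  assumes basis: "\<And>U. U \<subseteq> {..<p} \<Longrightarrow> orthonormal n (B U) \<and> (\<forall>k\<in>U. in_span n (B U) (\<lambda>i. X i k))"
    and "s \<le> p"
    and bound: "\<And>T. T \<subseteq> {..<p} \<Longrightarrow> card T = s \<Longrightarrow>
      proj_norm_sq n (B (support_on {..<p} bh \<union> T)) \<epsilon> \<le> c"
  shows "(SUP \<beta>\<in>{\<beta>. l0norm p \<beta> = s}.
      (inner_n n \<epsilon> (matvec p X (\<lambda>k. bh k - \<beta> k)) / norm_n n (matvec p X (\<lambda>k. bh k - \<beta> k)))\<^sup>2) \<le> c"
proof (rule cSUP_least)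
  have "support_on {..<p} (\<lambda>k. if k < s then 1 else (0::real)) = {..<s}"
    using \<open>s \<le> p\<close> by (auto simp: support_on_def)
  then have "l0norm p (\<lambda>k. if k < s then 1 else 0) = s"
    by (simp add: l0norm_eq_card_support)
  then show "{\<beta>. l0norm p \<beta> = s} \<noteq> {}"
    by blast
next
  fix \<beta> :: "nat \<Rightarrow> real"
  assume "\<beta> \<in> {\<beta>. l0norm p \<beta> = s}"
  then have T: "support_on {..<p} \<beta> \<subseteq> {..<p}" "card (support_on {..<p} \<beta>) = s"
    by (auto simp: l0norm_eq_card_support support_on_def)
  define U where "U = support_on {..<p} bh \<union> support_on {..<p} \<beta>"
  have "U \<subseteq> {..<p}" "support_on {..<p} (\<lambda>k. bh k - \<beta> k) \<subseteq> U"
    by (auto simp: U_def support_on_def)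
  with basis have "in_span n (B U) (matvec p X (\<lambda>k. bh k - \<beta> k))"
    by (intro in_span_matvec) auto
  then have "(inner_n n \<epsilon> (matvec p X (\<lambda>k. bh k - \<beta> k)) / norm_n n (matvec p X (\<lambda>k. bh k - \<beta> k)))\<^sup>2
      \<le> proj_norm_sq n (B U) \<epsilon>"
    using basis \<open>U \<subseteq> {..<p}\<close> by (intro ratio_sq_le_proj_norm_sq) auto
  also have "\<dots> \<le> c"
    unfolding U_def using bound T by blast
  finally show "(inner_n n \<epsilon> (matvec p X (\<lambda>k. bh k - \<beta> k)) / norm_n n (matvec p X (\<lambda>k. bh k - \<beta> k)))\<^sup>2
      \<le> c" .
qed

lemma event_E1_subset_proj_tail_events:
  assumes basis: "\<And>U. U \<subseteq> {..<p} \<Longrightarrow> orthonormal n (B U) \<and> (\<forall>k\<in>U. in_span n (B U) (\<lambda>i. X i k))"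
    and "n > 0" "s \<le> p"
  shows "event_E1 n p X \<sigma> lam0 est t s \<subseteq>
    (\<Union>S\<in>Pow {..<p}. \<Union>T\<in>{T. T \<subseteq> {..<p} \<and> card T = s}.
      proj_tail_event n \<sigma> (B (S \<union> T)) (t + real n * lam0 * real (card S)))"
    (is "_ \<subseteq> ?A")
proof
  fix \<epsilon>
  assume E1: "\<epsilon> \<in> event_E1 n p X \<sigma> lam0 est t s"
  define S where "S = support_on {..<p} (snd (est \<epsilon>))"
  show "\<epsilon> \<in> ?A"
  proof (rule ccontr)
    assume not_A: "\<epsilon> \<notin> ?A"
    have "\<epsilon> \<in> space (gauss_noise n \<sigma>)" "S \<in> Pow {..<p}"
      using E1 by (auto simp: event_E1_def S_def support_on_def)
    have "proj_norm_sq n (B (S \<union> T)) \<epsilon> \<le> (t + real n * lam0 * real (card S)) / 4"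
      if "T \<subseteq> {..<p}" "card T = s" for T
    proof -
      have "\<not> t + real n * lam0 * real (card S) < 4 * proj_norm_sq n (B (S \<union> T)) \<epsilon>"
        using not_A \<open>\<epsilon> \<in> space (gauss_noise n \<sigma>)\<close> \<open>S \<in> Pow {..<p}\<close> that
        unfolding proj_tail_event_def by blast
      then show ?thesis
        by simp
    qed
    then have "(SUP \<beta>\<in>{\<beta>. l0norm p \<beta> = s}. (inner_n n \<epsilon> (matvec p X (\<lambda>k. snd (est \<epsilon>) k - \<beta> k))
        / norm_n n (matvec p X (\<lambda>k. snd (est \<epsilon>) k - \<beta> k)))\<^sup>2) \<le> (t + real n * lam0 * real (card S)) / 4"
      unfolding S_def using basis \<open>s \<le> p\<close> by (intro SUP_sparse_ratio_sq_le) auto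
    then show False
      using E1 \<open>n > 0\<close>
      by (auto simp: event_E1_def l0norm_eq_card_support S_def[symmetric] field_simps)
  qed
qed

section \<open>Union bound\<close>

lemma sum_Pow_power_card:
  assumes "finite A"
  shows "(\<Sum>S\<in>Pow A. (r::real) ^ card S) = (1 + r) ^ card A"
  using prod_add[OF assms, of "\<lambda>_. r" "\<lambda>_. 1"] by (simp add: add.commute)

lemma one_add_power_le_exp:
  fixes r :: real
  assumes "0 \<le> r"
  shows "(1 + r) ^ p \<le> exp (r * real p)"
proof -
  have "(1 + r) ^ p \<le> exp r ^ p"
    using assms by (intro power_mono) (auto simp: add.commute exp_ge_add_one_self)
  then show ?thesis
    by (simp add: mult.commute[of r] exp_of_nat_mult)
qed

lemma measure_Union_proj_tail_events_le:
  assumes "\<sigma> > 0"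
    and basis: "\<And>U. U \<subseteq> {..<p} \<Longrightarrow> orthonormal n (B U) \<and> length (B U) \<le> card U"
  shows "measure (gauss_noise n \<sigma>) (\<Union>S\<in>Pow {..<p}. \<Union>T\<in>{T. T \<subseteq> {..<p} \<and> card T = s}.
      proj_tail_event n \<sigma> (B (S \<union> T)) (t + c * real (card S)))
    \<le> real (p choose s) * exp (- t / (16 * \<sigma>\<^sup>2)) * sqrt 2 ^ s
      * (1 + sqrt 2 * exp (- c / (16 * \<sigma>\<^sup>2))) ^ p"
proof -
  define M where "M = gauss_noise n \<sigma>"
  define Ts where "Ts = {T. T \<subseteq> {..<p} \<and> card T = s}"
  define F where "F S T = proj_tail_event n \<sigma> (B (S \<union> T)) (t + c * real (card S))" for S T
  define K where "K = exp (- t / (16 * \<sigma>\<^sup>2))"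
  define r where "r = sqrt 2 * exp (- c / (16 * \<sigma>\<^sup>2))"
  have fin: "finite Ts"
    unfolding Ts_def by (rule finite_subset[of _ "Pow {..<p}"]) auto
  have F_sets: "F S T \<in> sets M" for S T
    unfolding F_def M_def by measurable
  have F_le: "measure M (F S T) \<le> K * sqrt 2 ^ s * r ^ card S" if "S \<in> Pow {..<p}" "T \<in> Ts" for S T
  proof -
    have "S \<union> T \<subseteq> {..<p}" "card (S \<union> T) \<le> card S + s"
      using that card_Un_le[of S T] by (auto simp: Ts_def)
    then have onb: "orthonormal n (B (S \<union> T))" and len: "length (B (S \<union> T)) \<le> card S + s"
      using basis[of "S \<union> T"] by auto
    have "- (t + c * real (card S)) / (16 * \<sigma>\<^sup>2) = - t / (16 * \<sigma>\<^sup>2) + real (card S) * (- c / (16 * \<sigma>\<^sup>2))"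
      using assms(1) by (simp add: field_simps)
    then have exp_split: "exp (- (t + c * real (card S)) / (16 * \<sigma>\<^sup>2)) = K * exp (- c / (16 * \<sigma>\<^sup>2)) ^ card S"
      unfolding K_def by (simp only: exp_add exp_of_nat_mult)
    have "measure M (F S T) \<le> sqrt 2 ^ length (B (S \<union> T)) * exp (- (t + c * real (card S)) / (16 * \<sigma>\<^sup>2))"
      unfolding M_def F_def using assms(1) onb by (rule measure_proj_tail_event_le)
    also have "\<dots> \<le> sqrt 2 ^ (card S + s) * exp (- (t + c * real (card S)) / (16 * \<sigma>\<^sup>2))"
      using len by (intro mult_right_mono power_increasing) auto
    also have "\<dots> = K * sqrt 2 ^ s * r ^ card S"
      unfolding exp_split r_def by (simp only: power_add power_mult_distrib mult_ac)
    finally show ?thesis .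
  qed
  have "measure M (\<Union>S\<in>Pow {..<p}. \<Union>T\<in>Ts. F S T) \<le> (\<Sum>S\<in>Pow {..<p}. measure M (\<Union>T\<in>Ts. F S T))"
    using fin F_sets by (intro measure_UNION_le sets.finite_UN) auto
  also have "\<dots> \<le> (\<Sum>S\<in>Pow {..<p}. \<Sum>T\<in>Ts. measure M (F S T))"
    using fin F_sets by (intro sum_mono measure_UNION_le)
  also have "\<dots> \<le> (\<Sum>S\<in>Pow {..<p}. \<Sum>T\<in>Ts. K * sqrt 2 ^ s * r ^ card S)"
    using F_le by (intro sum_mono) auto
  also have "\<dots> = real (card Ts) * K * sqrt 2 ^ s * (\<Sum>S\<in>Pow {..<p}. r ^ card S)"
    by (simp add: sum_distrib_left mult_ac)
  also have "\<dots> = real (p choose s) * K * sqrt 2 ^ s * (1 + r) ^ p"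
    using n_subsets[of "{..<p}" s] sum_Pow_power_card[of "{..<p}" r] by (simp add: Ts_def)
  finally show ?thesis
    unfolding M_def Ts_def F_def K_def r_def .
qed

lemma sqrt2_exp_neg_times_le_1:
  fixes c \<sigma> :: real
  assumes "p \<ge> 1" "\<sigma> > 0" "c \<ge> 32 * \<sigma>\<^sup>2 * ln (exp 1 * real p)"
  shows "sqrt 2 * exp (- c / (16 * \<sigma>\<^sup>2)) * real p \<le> 1"
proof -
  have ep: "exp 1 * real p > 0"
    using assms(1) by simp
  have "2 * ln (exp 1 * real p) \<le> c / (16 * \<sigma>\<^sup>2)"
    using assms(2,3) by (simp add: field_simps)
  then have "exp (- c / (16 * \<sigma>\<^sup>2)) \<le> exp (- ln ((exp 1 * real p)\<^sup>2))"
    using ep by (simp add: ln_realpow)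
  also have "\<dots> = 1 / (exp 1 * real p)\<^sup>2"
    using assms(1) by (simp add: exp_minus inverse_eq_divide)
  finally have "sqrt 2 * exp (- c / (16 * \<sigma>\<^sup>2)) * real p \<le> sqrt 2 / ((exp 1)\<^sup>2 * real p)"
    using assms(1) by (simp add: field_simps power2_eq_square)
  also have "\<dots> \<le> 1"
  proof -
    have "sqrt 2 \<le> 2 * 2"
      using sqrt2_less_2 by simp
    also have "\<dots> \<le> exp 1 * exp 1"
      using exp_ge_add_one_self[of 1] by (intro mult_mono) auto
    also have "\<dots> \<le> exp 1 * exp 1 * real p"
      using assms(1) by simp
    finally show ?thesis
      using assms(1) by (simp add: power2_eq_square field_simps)
  qed
  finally show ?thesis .
qed

lemma binomial_weight_le:
  fixes r :: real
  assumes "p \<ge> 1" "s \<le> p" "0 \<le> r" "r * real p \<le> 1"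
  shows "real (p choose s) * sqrt 2 ^ s * (1 + r) ^ p \<le> 4 * exp (2 * real s * ln (3 * exp 1 * real p))"
proof -
  have "(1 + r) ^ p \<le> exp (r * real p)"
    by (rule one_add_power_le_exp[OF assms(3)])
  also have "\<dots> \<le> exp 1"
    using assms(4) by simp
  also have "\<dots> \<le> 3"
    by (rule exp_le)
  finally have pow: "(1 + r) ^ p \<le> 3" .
  have binom: "real (p choose s) \<le> real p ^ s"
    using binomial_le_pow[OF assms(2)] by (metis of_nat_le_iff of_nat_power)
  have "sqrt 2 * real p \<le> 9 * real p * real p"
    using sqrt2_less_2 assms(1) by (intro mult_mono) auto
  also have "\<dots> \<le> 9 * real p * real p * (exp 1 * exp 1)"
    using mult_left_mono[of 1 "exp 1 * exp 1" "9 * real p * real p"] by (simp flip: exp_add)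
  also have "\<dots> = (3 * exp 1 * real p)\<^sup>2"
    by (simp add: power2_eq_square mult_ac)
  finally have base: "sqrt 2 * real p \<le> (3 * exp 1 * real p)\<^sup>2" .
  have "real (p choose s) * sqrt 2 ^ s * (1 + r) ^ p \<le> real p ^ s * sqrt 2 ^ s * 3"
    using binom pow assms(3) by (intro mult_mono) auto
  also have "\<dots> = 3 * (sqrt 2 * real p) ^ s"
    by (simp add: power_mult_distrib)
  also have "\<dots> \<le> 4 * ((3 * exp 1 * real p)\<^sup>2) ^ s"
    using base by (intro mult_mono power_mono) auto
  also have "((3 * exp 1 * real p)\<^sup>2) ^ s = exp (2 * real s * ln (3 * exp 1 * real p))"
  proof -
    have "exp (real (2 * s) * ln (3 * exp 1 * real p)) = exp (ln (3 * exp 1 * real p)) ^ (2 * s)"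
      by (rule exp_of_nat_mult)
    then show ?thesis
      using assms(1) by (simp add: power_mult)
  qed
  finally show ?thesis .
qed

theorem measure_event_E1_le:
  fixes X :: "nat \<Rightarrow> nat \<Rightarrow> real" and est :: "(nat \<Rightarrow> real) \<Rightarrow> real \<times> (nat \<Rightarrow> real)"
  assumes "n > 0" "p \<ge> 1" "\<sigma> > 0" "lam0 \<ge> 32 * \<sigma>\<^sup>2 * ln (exp 1 * real p) / real n" "s \<le> p"
  shows "\<exists>A\<in>sets (gauss_noise n \<sigma>). event_E1 n p X \<sigma> lam0 est t s \<subseteq> A \<and>
    measure (gauss_noise n \<sigma>) A \<le> 4 * exp (- t / (16 * \<sigma>\<^sup>2) + 2 * real s * ln (3 * exp 1 * real p))"
proof -
  have "\<exists>es. finite U \<longrightarrow>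
      orthonormal n es \<and> length es \<le> card U \<and> (\<forall>k\<in>U. in_span n es (\<lambda>i. X i k))" for U
    using orthonormal_spanning_list_exists[of U n "\<lambda>k i. X i k"] by blast
  then obtain B where "\<forall>U. finite U \<longrightarrow>
      orthonormal n (B U) \<and> length (B U) \<le> card U \<and> (\<forall>k\<in>U. in_span n (B U) (\<lambda>i. X i k))"
    by (rule choice[OF allI, THEN exE])
  then have basis: "\<And>U. U \<subseteq> {..<p} \<Longrightarrow> orthonormal n (B U) \<and> length (B U) \<le> card U
      \<and> (\<forall>k\<in>U. in_span n (B U) (\<lambda>i. X i k))"
    using finite_subset by blast
  define A where "A = (\<Union>S\<in>Pow {..<p}. \<Union>T\<in>{T. T \<subseteq> {..<p} \<and> card T = s}.
      proj_tail_event n \<sigma> (B (S \<union> T)) (t + real n * lam0 * real (card S)))"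
  define r where "r = sqrt 2 * exp (- (real n * lam0) / (16 * \<sigma>\<^sup>2))"
  have "finite {T. T \<subseteq> {..<p} \<and> card T = s}"
    by (rule finite_subset[of _ "Pow {..<p}"]) auto
  then have A_sets: "A \<in> sets (gauss_noise n \<sigma>)"
    unfolding A_def by (intro sets.finite_UN) auto
  have E1_subset: "event_E1 n p X \<sigma> lam0 est t s \<subseteq> A"
    unfolding A_def using basis assms(1,5) by (intro event_E1_subset_proj_tail_events) auto
  have "r * real p \<le> 1"
    unfolding r_def using assms(1-4)
    by (intro sqrt2_exp_neg_times_le_1) (auto simp: pos_divide_le_eq mult.commute)
  then have weight: "real (p choose s) * sqrt 2 ^ s * (1 + r) ^ p
      \<le> 4 * exp (2 * real s * ln (3 * exp 1 * real p))"
    using assms(2,5) by (intro binomial_weight_le) (auto simp: r_def)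
  have "measure (gauss_noise n \<sigma>) A
      \<le> real (p choose s) * exp (- t / (16 * \<sigma>\<^sup>2)) * sqrt 2 ^ s * (1 + r) ^ p"
    unfolding A_def r_def
    by (rule measure_Union_proj_tail_events_le[OF assms(3)]) (use basis in blast)
  also have "\<dots> = exp (- t / (16 * \<sigma>\<^sup>2)) * (real (p choose s) * sqrt 2 ^ s * (1 + r) ^ p)"
    by (simp only: mult_ac)
  also have "\<dots> \<le> exp (- t / (16 * \<sigma>\<^sup>2)) * (4 * exp (2 * real s * ln (3 * exp 1 * real p)))"
    using weight by (rule mult_left_mono) simp
  also have "\<dots> = 4 * exp (- t / (16 * \<sigma>\<^sup>2) + 2 * real s * ln (3 * exp 1 * real p))"
    by (simp only: exp_add mult_ac)
  finally show ?thesis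
    using A_sets E1_subset by blast
qed

lemma num_cols_ge_1:
  assumes "n > 0" "q \<ge> 1" "\<forall>i<n. \<forall>j<q. C i j \<in> {1..pj j}"
  shows "num_cols q pj N \<ge> 1"
proof -
  have "1 \<le> pj 0"
    using assms by force
  also have "pj 0 \<le> (\<Sum>j<q. pj j)"
    using assms(2) by (intro member_le_sum) auto
  finally show ?thesis
    unfolding num_cols_def by simp
qed

theorem lemmaB1:
  shows "\<exists>a::real. a > 0 \<and> (\<exists>c0::real. c0 > 0 \<and>
    (\<forall>(n::nat) (q::nat) (pj::nat \<Rightarrow> nat) (N::nat) (C::nat \<Rightarrow> nat \<Rightarrow> nat)
       (W::nat \<Rightarrow> nat \<Rightarrow> real) (\<sigma>::real) (fstar::nat \<Rightarrow> real) (lam::real) (lam0::real)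
       (est::(nat \<Rightarrow> real) \<Rightarrow> real \<times> (nat \<Rightarrow> real)) (t::real) (s::nat).
       n > 0 \<and> q \<ge> 1 \<and> (\<forall>i<n. \<forall>j<q. C i j \<in> {1..pj j}) \<and> \<sigma> > 0 \<and>
       lam \<ge> 0 \<and> lam0 \<ge> c0 * \<sigma>\<^sup>2 * ln (exp 1 * real (num_cols q pj N)) / real n \<and>
       (\<forall>\<epsilon>\<in>space (gauss_noise n \<sigma>).
          is_global_minimiser n (num_cols q pj N) q pj (design q pj C W)
            (\<lambda>i. fstar i + \<epsilon> i) lam0 lam (est \<epsilon>)) \<and>
       t > 0 \<and> s \<le> num_cols q pj N
       \<longrightarrow> (\<exists>A\<in>sets (gauss_noise n \<sigma>).
              event_E1 n (num_cols q pj N) (design q pj C W) \<sigma> lam0 est t s \<subseteq> A \<and>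
              measure (gauss_noise n \<sigma>) A
                \<le> 4 * exp (- t / (a * \<sigma>\<^sup>2) + 2 * real s * ln (3 * exp 1 * real (num_cols q pj N))))))"
  by (rule exI[of _ 16], rule conjI, simp, rule exI[of _ 32], rule conjI, simp,
      intro allI impI, elim conjE, intro measure_event_E1_le num_cols_ge_1)

end
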